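(* Let $m,n,k$ be positive integers, $A\in\mathbb{R}^{m\times n}$, $x^*\in\mathbb{R}^n$ with support $S^*=\{i: x^*_i\neq 0\}$ satisfying $1\le |S^*|\le k$, $e\in\mathbb{R}^m$ and $y=Ax^*+e$. Assume $A$ satisfies the $(2k+1)$-RIP, that $\|A_i\|_2=1$ for every column $A_i$ of $A$, and that $$\gamma_k^{RIP}\|e\|_2<\frac{\min_{i\in S^*}|x^*_i|}{2k}-\alpha_k^{RIP}\|x^*\|_2 .$$ Then for every initialization $\mathcal{X}^0\in\mathbb{R}^n$ and every step size $\eta>0$, the sets $S^t$ generated by SEA satisfy: there exists an integer $t_s\le T_{RIP}$ with $S^*\subseteq S^{t_s}$, where $$T_{RIP}=\frac{2k\frac{\|\mathcal{X}^0\|_\infty}{\eta}+(k+1)\min_{i\in S^*}|x^*_i|}{\min_{i\in S^*}|x^*_i|-2k\left(\alpha_k^{RIP}\|x^*\|_2+\gamma_k^{RIP}\|e\|_2\right)}.$$ If moreover $\min_{i\in S^*}|x^*_i|>\frac{2}{\sqrt{1-\delta_{2k}}}\|e\|_2$ and SEA is run for $N>T_{RIP}$ iterations, then $S^*\subseteq S^{t_{BEST}}$ and $\|x^{t_{BEST}}-x^*\|_2\le\frac{2}{\sqrt{1-\delta_k}}\|e\|_2$.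
   Context: For $l\in\{1,\dots,n\}$, the restricted isometry constant $\delta_l$ of $A$ is the smallest $\delta\ge0$ such that $(1-\delta)\|x\|_2^2\le\|Ax\|_2^2\le(1+\delta)\|x\|_2^2$ for all $x\in\mathbb{R}^n$ with at most $l$ nonzero entries; $A$ satisfies the $l$-RIP if $\delta_l<1$. Define $\alpha_k^{RIP}=\delta_{2k+1}\left(1+\frac{\delta_{2k}}{1-\delta_k}\right)$ and $\gamma_k^{RIP}=1+\frac{\delta_{2k+1}\sqrt{1+\delta_k}}{1-\delta_k}$. For $v\in\mathbb{R}^n$, $\mathrm{largest}_k(v)$ is the set of indices of the $k$ entries of $v$ with largest absolute value (ties broken by selecting the highest indices). For $S\subseteq\{1,\dots,n\}$, $A_S$ is the submatrix of $A$ formed by the columns indexed by $S$, $v_S$ the restriction of a vector $v$ to $S$, and $A_S^\dagger$ the Moore–Penrose pseudoinverse of $A_S$. The Support Exploration Algorithm (SEA) with initialization $\mathcal{X}^0$ and step size $\eta>0$ generates, for $t=0,1,2,\dots$: $S^t=\mathrm{largest}_k(\mathcal{X}^t)$; $x^t\in\mathbb{R}^n$ with $x^t_i=0$ for $i\notin S^t$ and $x^t_{S^t}=A_{S^t}^\dagger y$; $\mathcal{X}^{t+1}=\mathcal{X}^t-\eta A^T(Ax^t-y)$. When SEA is run for $N$ iterations (computing $x^0,\dots,x^{N-1}$), it outputs $x^{t_{BEST}}$ where $t_{BEST}\in\arg\min_{t'\in\{0,\dots,N-1\}}\|Ax^{t'}-y\|_2$. *)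

theory Defs
  imports Complex_Main
begin

text \<open>Vectors of R^n are functions nat => real, only the entries with
index < n (i.e. indices 0..n-1 in place of 1..n) are meaningful. An m x n matrix A is
a function nat => nat => real with entry A i j, i < m, j < n.\<close>

definition vnorm :: "nat \<Rightarrow> (nat \<Rightarrow> real) \<Rightarrow> real" where
  "vnorm n x = sqrt (\<Sum>i<n. (x i)\<^sup>2)"

definition vinfnorm :: "nat \<Rightarrow> (nat \<Rightarrow> real) \<Rightarrow> real" where
  "vinfnorm n x = Max ((\<lambda>i. \<bar>x i\<bar>) ` {..<n})"

definition mv :: "(nat \<Rightarrow> nat \<Rightarrow> real) \<Rightarrow> nat \<Rightarrow> (nat \<Rightarrow> real) \<Rightarrow> (nat \<Rightarrow> real)" where
  "mv A n x = (\<lambda>i. \<Sum>j<n. A i j * x j)"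

definition supp :: "nat \<Rightarrow> (nat \<Rightarrow> real) \<Rightarrow> nat set" where
  "supp n x = {i. i < n \<and> x i \<noteq> 0}"

definition ric :: "(nat \<Rightarrow> nat \<Rightarrow> real) \<Rightarrow> nat \<Rightarrow> nat \<Rightarrow> nat \<Rightarrow> real" where
  "ric A m n l = Inf {d. d \<ge> 0 \<and>
     (\<forall>x. (\<forall>i\<ge>n. x i = 0) \<and> card (supp n x) \<le> l \<longrightarrow>
        (1 - d) * (vnorm n x)\<^sup>2 \<le> (vnorm m (mv A n x))\<^sup>2 \<and>
        (vnorm m (mv A n x))\<^sup>2 \<le> (1 + d) * (vnorm n x)\<^sup>2)}"

definition alphaRIP :: "(nat \<Rightarrow> nat \<Rightarrow> real) \<Rightarrow> nat \<Rightarrow> nat \<Rightarrow> nat \<Rightarrow> real" where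
  "alphaRIP A m n k = ric A m n (2*k+1) * (1 + ric A m n (2*k) / (1 - ric A m n k))"

definition gammaRIP :: "(nat \<Rightarrow> nat \<Rightarrow> real) \<Rightarrow> nat \<Rightarrow> nat \<Rightarrow> nat \<Rightarrow> real" where
  "gammaRIP A m n k = 1 + ric A m n (2*k+1) * sqrt (1 + ric A m n k) / (1 - ric A m n k)"

text \<open>largest_k: indices (< n) of the k entries of largest absolute value, ties broken
by preferring higher indices.\<close>
definition largest :: "nat \<Rightarrow> nat \<Rightarrow> (nat \<Rightarrow> real) \<Rightarrow> nat set" where
  "largest n k v = {i. i < n \<and>
     card {j. j < n \<and> (\<bar>v j\<bar> > \<bar>v i\<bar> \<or> (\<bar>v j\<bar> = \<bar>v i\<bar> \<and> j > i))} < k}"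

definition mmul :: "nat set \<Rightarrow> (nat \<Rightarrow> nat \<Rightarrow> real) \<Rightarrow> (nat \<Rightarrow> nat \<Rightarrow> real) \<Rightarrow> (nat \<Rightarrow> nat \<Rightarrow> real)" where
  "mmul J M N = (\<lambda>i l. \<Sum>j\<in>J. M i j * N j l)"

text \<open>Moore--Penrose pseudoinverse of the matrix M with rows indexed by I and columns
indexed by J (via the four Penrose equations); it has rows indexed by J and columns by I,
and is set to 0 outside J x I.\<close>
definition pinv :: "nat set \<Rightarrow> nat set \<Rightarrow> (nat \<Rightarrow> nat \<Rightarrow> real) \<Rightarrow> (nat \<Rightarrow> nat \<Rightarrow> real)" where
  "pinv I J M = (THE B. (\<forall>i l. \<not> (i \<in> J \<and> l \<in> I) \<longrightarrow> B i l = 0) \<and>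
     (\<forall>i\<in>I. \<forall>l\<in>J. mmul I (mmul J M B) M i l = M i l) \<and>
     (\<forall>i\<in>J. \<forall>l\<in>I. mmul J (mmul I B M) B i l = B i l) \<and>
     (\<forall>i\<in>I. \<forall>l\<in>I. mmul J M B i l = mmul J M B l i) \<and>
     (\<forall>i\<in>J. \<forall>l\<in>J. mmul I B M i l = mmul I B M l i))"

text \<open>x supported on S with x_S = (A_S)^dagger y (A_S: rows {..<m}, columns S).\<close>
definition lsq :: "(nat \<Rightarrow> nat \<Rightarrow> real) \<Rightarrow> nat \<Rightarrow> nat set \<Rightarrow> (nat \<Rightarrow> real) \<Rightarrow> (nat \<Rightarrow> real)" where
  "lsq A m S y = (\<lambda>i. if i \<in> S then (\<Sum>p<m. pinv {..<m} S A i p * y p) else 0)"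

primrec seaX :: "(nat \<Rightarrow> nat \<Rightarrow> real) \<Rightarrow> nat \<Rightarrow> nat \<Rightarrow> nat \<Rightarrow> real \<Rightarrow> (nat \<Rightarrow> real)
                  \<Rightarrow> (nat \<Rightarrow> real) \<Rightarrow> nat \<Rightarrow> (nat \<Rightarrow> real)" where
  "seaX A m n k eta y X0 0 = X0"
| "seaX A m n k eta y X0 (Suc t) =
     (let X = seaX A m n k eta y X0 t;
          x = lsq A m (largest n k X) y
      in (\<lambda>i. X i - eta * (\<Sum>p<m. A p i * (mv A n x p - y p))))"

definition seaS :: "(nat \<Rightarrow> nat \<Rightarrow> real) \<Rightarrow> nat \<Rightarrow> nat \<Rightarrow> nat \<Rightarrow> real \<Rightarrow> (nat \<Rightarrow> real)
                  \<Rightarrow> (nat \<Rightarrow> real) \<Rightarrow> nat \<Rightarrow> nat set" where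
  "seaS A m n k eta y X0 t = largest n k (seaX A m n k eta y X0 t)"

definition seax :: "(nat \<Rightarrow> nat \<Rightarrow> real) \<Rightarrow> nat \<Rightarrow> nat \<Rightarrow> nat \<Rightarrow> real \<Rightarrow> (nat \<Rightarrow> real)
                  \<Rightarrow> (nat \<Rightarrow> real) \<Rightarrow> nat \<Rightarrow> (nat \<Rightarrow> real)" where
  "seax A m n k eta y X0 t = lsq A m (seaS A m n k eta y X0 t) y"

definition is_tbest :: "(nat \<Rightarrow> nat \<Rightarrow> real) \<Rightarrow> nat \<Rightarrow> nat \<Rightarrow> nat \<Rightarrow> real \<Rightarrow> (nat \<Rightarrow> real)
                  \<Rightarrow> (nat \<Rightarrow> real) \<Rightarrow> nat \<Rightarrow> nat \<Rightarrow> bool" where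
  "is_tbest A m n k eta y X0 N t \<longleftrightarrow> t < N \<and>
     (\<forall>t'<N. vnorm m (\<lambda>i. mv A n (seax A m n k eta y X0 t) i - y i)
             \<le> vnorm m (\<lambda>i. mv A n (seax A m n k eta y X0 t') i - y i))"

end

theory Submission
  imports Defs "HOL-Analysis.L2_Norm" "HOL-Library.Product_Lexorder"
begin

text \<open>
  Two properties of a least-squares step drive the argument. If \<open>|S| \<le> k\<close> and \<open>x\<close> is the
  least-squares solution supported on \<open>S\<close>, the gradient \<open>A\<^sup>T (A x - y)\<close> vanishes on \<open>S\<close>
  (normal equations), and off \<open>S\<close> its \<open>i\<close>-th entry is within \<open>\<rho> = \<alpha> \<parallel>x\<^sup>*\<parallel> + \<gamma> \<parallel>e\<parallel>\<close> of
  \<open>-x\<^sup>*\<^sub>i\<close>, by the restricted isometry property applied to \<open>x - x\<^sup>*\<close>.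

  In SEA the selected coordinates of \<open>X\<^sup>t\<close> are therefore frozen, while an unselected support
  index \<open>i\<close> moves in the direction of \<open>sgn x\<^sup>*\<^sub>i\<close> by at least \<open>\<eta> (min\<^sub>j \<bar>x\<^sup>*\<^sub>j\<bar> - \<rho>)\<close> per step.
  Being unselected, it is dominated by an off-support coordinate, which drifts by at most
  \<open>\<eta> \<rho>\<close> per step from its initial value. Counting, over the support indices, the rounds in
  which they are missed bounds the first time at which the whole support is selected.

  From then on the residual \<open>\<parallel>A x\<^sup>t - y\<parallel>\<close> is at most \<open>\<parallel>e\<parallel>\<close>, so the same holds for the best
  iterate, and the lower RIP bound turns a residual of at most \<open>\<parallel>e\<parallel>\<close> into support recovery
  and the error bound.
\<close>

section \<open>Euclidean geometry of truncated vectors\<close>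

definition vinner :: "nat \<Rightarrow> (nat \<Rightarrow> real) \<Rightarrow> (nat \<Rightarrow> real) \<Rightarrow> real" where
  "vinner m u v = (\<Sum>p<m. u p * v p)"

lemma vnorm_eq_L2_set: "vnorm n x = L2_set x {..<n}"
  unfolding vnorm_def L2_set_def ..

lemma vnorm_nonneg [simp]: "0 \<le> vnorm n x"
  by (simp add: vnorm_eq_L2_set)

lemma vnorm_power2: "(vnorm n x)\<^sup>2 = (\<Sum>i<n. (x i)\<^sup>2)"
  unfolding vnorm_def by (simp add: sum_nonneg)

lemma vnorm_eq_0_iff: "vnorm n x = 0 \<longleftrightarrow> (\<forall>i<n. x i = 0)"
  by (auto simp: vnorm_eq_L2_set L2_set_eq_0_iff)

lemma vnorm_triangle: "vnorm n (\<lambda>i. u i + v i) \<le> vnorm n u + vnorm n v"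
  unfolding vnorm_eq_L2_set by (rule L2_set_triangle_ineq)

lemma vnorm_mono: "(\<And>i. i < n \<Longrightarrow> \<bar>u i\<bar> \<le> \<bar>v i\<bar>) \<Longrightarrow> vnorm n u \<le> vnorm n v"
  unfolding vnorm_def by (intro real_sqrt_le_mono sum_mono) (simp add: abs_le_square_iff)

lemma abs_le_vnorm: "i < n \<Longrightarrow> \<bar>x i\<bar> \<le> vnorm n x"
  using member_le_L2_set[of "{..<n}" i "\<lambda>i. \<bar>x i\<bar>"] by (simp add: vnorm_eq_L2_set L2_set_def)

lemma vinner_self: "vinner n x x = (vnorm n x)\<^sup>2"
  unfolding vinner_def vnorm_power2 by (simp add: power2_eq_square)

lemma vinner_Cauchy_Schwarz: "\<bar>vinner n u v\<bar> \<le> vnorm n u * vnorm n v"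
proof -
  have "\<bar>vinner n u v\<bar> \<le> (\<Sum>p<n. \<bar>u p\<bar> * \<bar>v p\<bar>)"
    unfolding vinner_def abs_mult[symmetric] by (rule sum_abs)
  also have "\<dots> \<le> vnorm n u * vnorm n v"
    unfolding vnorm_eq_L2_set by (rule L2_set_mult_ineq)
  finally show ?thesis .
qed

lemma vnorm_lincomb_power2:
  "(vnorm n (\<lambda>i. a * u i + b * v i))\<^sup>2
     = a\<^sup>2 * (vnorm n u)\<^sup>2 + 2 * a * b * vinner n u v + b\<^sup>2 * (vnorm n v)\<^sup>2"
  unfolding vnorm_power2 vinner_def
  by (simp add: power2_eq_square algebra_simps sum.distrib sum_distrib_left)

lemma mv_lincomb: "mv A n (\<lambda>j. a * u j + b * v j) p = a * mv A n u p + b * mv A n v p"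
  unfolding mv_def by (simp add: algebra_simps sum.distrib sum_distrib_left)

lemma mv_diff: "mv A n (\<lambda>j. u j - v j) p = mv A n u p - mv A n v p"
  unfolding mv_def by (simp add: algebra_simps sum_subtractf)

lemma mv_eq_sum_on:
  assumes "S \<subseteq> {..<n}" and "\<And>j. j \<notin> S \<Longrightarrow> x j = 0"
  shows "mv A n x p = (\<Sum>j\<in>S. A p j * x j)"
  unfolding mv_def using assms by (intro sum.mono_neutral_right) auto

definition mtv :: "(nat \<Rightarrow> nat \<Rightarrow> real) \<Rightarrow> nat \<Rightarrow> (nat \<Rightarrow> real) \<Rightarrow> (nat \<Rightarrow> real)" where
  "mtv A m r = (\<lambda>j. \<Sum>p<m. A p j * r p)"

lemma vinner_mv_left: "vinner m (mv A n u) r = (\<Sum>j<n. u j * mtv A m r j)"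
proof -
  have "vinner m (mv A n u) r = (\<Sum>p<m. \<Sum>j<n. u j * (A p j * r p))"
    unfolding vinner_def mv_def sum_distrib_right by (simp add: ac_simps)
  also have "\<dots> = (\<Sum>j<n. u j * mtv A m r j)"
    unfolding mtv_def sum_distrib_left by (rule sum.swap)
  finally show ?thesis .
qed

section \<open>Sparse vectors and restricted isometry constants\<close>

definition sparse :: "nat \<Rightarrow> nat \<Rightarrow> (nat \<Rightarrow> real) \<Rightarrow> bool" where
  "sparse n l x \<longleftrightarrow> (\<forall>i\<ge>n. x i = 0) \<and> card (supp n x) \<le> l"

lemma finite_supp [simp]: "finite (supp n x)"
  unfolding supp_def by simp

lemma sparse_if_supp_subset:
  assumes "\<forall>i\<ge>n. x i = 0" and "supp n x \<subseteq> S" and "finite S" and "card S \<le> l"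
  shows "sparse n l x"
  unfolding sparse_def using assms card_mono le_trans by blast

lemma sparse_if_zero_outside:
  assumes S: "S \<subseteq> {..<n}" and "card S \<le> k" and zero: "\<And>j. j \<notin> S \<Longrightarrow> u j = 0"
  shows "sparse n k u"
proof (rule sparse_if_supp_subset)
  show "\<forall>i\<ge>n. u i = 0" using S zero by (meson lessThan_iff not_le subsetD)
  show "supp n u \<subseteq> S" using zero unfolding supp_def by blast
qed (use assms finite_subset[OF S] in auto)

lemma sparse_neg_masked: "sparse n k u \<Longrightarrow> sparse n k (\<lambda>j. if P j then 0 else - u j)"
  by (rule sparse_if_supp_subset[of _ _ "supp n u"]) (auto simp: sparse_def supp_def)

lemma sparse_lincomb:
  assumes "sparse n k u" and "sparse n l v"
  shows "sparse n (k + l) (\<lambda>i. a * u i + b * v i)"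
proof -
  have "supp n (\<lambda>i. a * u i + b * v i) \<subseteq> supp n u \<union> supp n v"
    unfolding supp_def by auto
  then have "card (supp n (\<lambda>i. a * u i + b * v i)) \<le> card (supp n u) + card (supp n v)"
    by (meson card_Un_le card_mono finite_UnI finite_supp le_trans)
  with assms show ?thesis unfolding sparse_def by auto
qed

definition ric_candidates :: "(nat \<Rightarrow> nat \<Rightarrow> real) \<Rightarrow> nat \<Rightarrow> nat \<Rightarrow> nat \<Rightarrow> real set" where
  "ric_candidates A m n l = {d. d \<ge> 0 \<and> (\<forall>x. sparse n l x \<longrightarrow>
     (1 - d) * (vnorm n x)\<^sup>2 \<le> (vnorm m (mv A n x))\<^sup>2 \<and>
     (vnorm m (mv A n x))\<^sup>2 \<le> (1 + d) * (vnorm n x)\<^sup>2)}"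

lemma ric_eq_Inf: "ric A m n l = Inf (ric_candidates A m n l)"
  unfolding ric_def ric_candidates_def sparse_def by simp

lemma vnorm_mv_le: "vnorm m (mv A n x) \<le> sqrt (\<Sum>p<m. (vnorm n (A p))\<^sup>2) * vnorm n x"
proof -
  have "(vnorm m (mv A n x))\<^sup>2 \<le> (\<Sum>p<m. (vnorm n (A p) * vnorm n x)\<^sup>2)"
    unfolding vnorm_power2[of m]
  proof (rule sum_mono)
    fix p
    have "\<bar>mv A n x p\<bar> \<le> vnorm n (A p) * vnorm n x"
      using vinner_Cauchy_Schwarz[of n "A p" x] by (simp add: vinner_def mv_def)
    from power_mono[OF this abs_ge_zero, of 2]
    show "(mv A n x p)\<^sup>2 \<le> (vnorm n (A p) * vnorm n x)\<^sup>2" by simp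
  qed
  also have "\<dots> = (sqrt (\<Sum>p<m. (vnorm n (A p))\<^sup>2) * vnorm n x)\<^sup>2"
    by (simp add: power_mult_distrib sum_distrib_right sum_nonneg)
  finally show ?thesis by (rule power2_le_imp_le) (simp add: sum_nonneg)
qed

lemma ric_candidates_nonempty: "ric_candidates A m n l \<noteq> {}"
proof -
  define F where "F = (\<Sum>p<m. (vnorm n (A p))\<^sup>2)"
  have "max 1 F \<in> ric_candidates A m n l"
    unfolding ric_candidates_def
  proof safe
    fix x
    have "(vnorm m (mv A n x))\<^sup>2 \<le> F * (vnorm n x)\<^sup>2"
      using power_mono[OF vnorm_mv_le[of m A n x] vnorm_nonneg, of 2] unfolding F_def
      by (simp add: power_mult_distrib sum_nonneg)
    also have "\<dots> \<le> (1 + max 1 F) * (vnorm n x)\<^sup>2"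
      by (intro mult_right_mono) auto
    finally show "(vnorm m (mv A n x))\<^sup>2 \<le> (1 + max 1 F) * (vnorm n x)\<^sup>2" .
    have "(1 - max 1 F) * (vnorm n x)\<^sup>2 \<le> 0"
      by (intro mult_nonpos_nonneg) auto
    then show "(1 - max 1 F) * (vnorm n x)\<^sup>2 \<le> (vnorm m (mv A n x))\<^sup>2"
      by (meson order_trans zero_le_power2)
  qed auto
  then show ?thesis by blast
qed

lemma ric_nonneg: "0 \<le> ric A m n l"
  unfolding ric_eq_Inf using ric_candidates_nonempty
  by (intro cInf_greatest) (auto simp: ric_candidates_def)

lemma ric_mono: "l \<le> l' \<Longrightarrow> ric A m n l \<le> ric A m n l'"
  unfolding ric_eq_Inf
  by (intro cInf_superset_mono ric_candidates_nonempty)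
    (auto simp: ric_candidates_def sparse_def bdd_below_def)

lemma ric_lt_1_mono: "ric A m n l' < 1 \<Longrightarrow> l \<le> l' \<Longrightarrow> ric A m n l < 1"
  using ric_mono[of l l' A m n] by linarith

lemma rip_bounds:
  assumes "sparse n l x"
  shows "(1 - ric A m n l) * (vnorm n x)\<^sup>2 \<le> (vnorm m (mv A n x))\<^sup>2 \<and>
         (vnorm m (mv A n x))\<^sup>2 \<le> (1 + ric A m n l) * (vnorm n x)\<^sup>2"
proof (cases "vnorm n x = 0")
  case True
  then have "mv A n x = (\<lambda>p. 0)"
    unfolding mv_def vnorm_eq_0_iff by simp
  with True show ?thesis by (simp add: vnorm_def)
next
  case False
  define N where "N = (vnorm n x)\<^sup>2"
  define M where "M = (vnorm m (mv A n x))\<^sup>2"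
  have "N > 0" using False by (simp add: N_def)
  have candidate: "(1 - d) * N \<le> M \<and> M \<le> (1 + d) * N" if "d \<in> ric_candidates A m n l" for d
    using assms that unfolding ric_candidates_def N_def M_def by blast
  have "(N - M) / N \<le> ric A m n l"
    unfolding ric_eq_Inf
  proof (rule cInf_greatest[OF ric_candidates_nonempty])
    fix d assume "d \<in> ric_candidates A m n l"
    from candidate[OF this] show "(N - M) / N \<le> d" using \<open>N > 0\<close> by (simp add: field_simps)
  qed
  moreover have "(M - N) / N \<le> ric A m n l"
    unfolding ric_eq_Inf
  proof (rule cInf_greatest[OF ric_candidates_nonempty])
    fix d assume "d \<in> ric_candidates A m n l"
    from candidate[OF this] show "(M - N) / N \<le> d" using \<open>N > 0\<close> by (simp add: field_simps)
  qed
  ultimately show ?thesis using \<open>N > 0\<close>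
    unfolding N_def[symmetric] M_def[symmetric] by (simp add: field_simps)
qed

lemma rip_lower_norm:
  assumes "sparse n l x" and "ric A m n l < 1"
  shows "sqrt (1 - ric A m n l) * vnorm n x \<le> vnorm m (mv A n x)"
proof -
  have "(sqrt (1 - ric A m n l) * vnorm n x)\<^sup>2 \<le> (vnorm m (mv A n x))\<^sup>2"
    using rip_bounds[OF assms(1)] assms(2) by (simp add: power_mult_distrib)
  then show ?thesis by (rule power2_le_imp_le) simp
qed

lemma rip_upper_norm:
  assumes "sparse n l x"
  shows "vnorm m (mv A n x) \<le> sqrt (1 + ric A m n l) * vnorm n x"
  using real_sqrt_le_mono[OF rip_bounds[OF assms, THEN conjunct2]] ric_nonneg[of A m n l]
  by (simp add: real_sqrt_mult)

lemma rip_error_bound: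
  assumes "sparse n l h" and "ric A m n l < 1" and "vnorm m (mv A n h) \<le> c"
  shows "vnorm n h \<le> c / sqrt (1 - ric A m n l)"
proof -
  have "sqrt (1 - ric A m n l) * vnorm n h \<le> c"
    using rip_lower_norm[OF assms(1,2)] assms(3) by linarith
  then show ?thesis using assms(2) by (simp add: pos_le_divide_eq mult.commute)
qed

text \<open>Polarization: for \<open>s = \<plusminus>1\<close> the vectors \<open>\<parallel>v\<parallel> u \<plusminus> \<parallel>u\<parallel> v\<close> have equal norms, so the
  difference of the upper and lower RIP bounds controls their cross term.\<close>
lemma rip_inner_disjoint:
  assumes u: "sparse n k u" and v: "sparse n l v" and disjoint: "\<forall>i. u i = 0 \<or> v i = 0"
  shows "\<bar>vinner m (mv A n u) (mv A n v)\<bar> \<le> ric A m n (k + l) * vnorm n u * vnorm n v"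
proof (cases "vnorm n u = 0 \<or> vnorm n v = 0")
  case True
  then have "mv A n u = (\<lambda>p. 0) \<or> mv A n v = (\<lambda>p. 0)"
    unfolding mv_def vnorm_eq_0_iff by auto
  then show ?thesis using True by (auto simp: vinner_def)
next
  case False
  define a where "a = vnorm n v"
  define b where "b = vnorm n u"
  define \<delta> where "\<delta> = ric A m n (k + l)"
  define P where "P = vinner m (mv A n u) (mv A n v)"
  have "a > 0" "b > 0" using False by (auto simp: a_def b_def less_le)
  have "vinner n u v = 0"
    unfolding vinner_def using disjoint by (intro sum.neutral) auto
  have cross: "a * b * (s * P) \<le> \<delta> * a\<^sup>2 * b\<^sup>2" if s: "s = 1 \<or> s = -1" for s :: real
  proof -
    define w where "w = (\<lambda>s' i. a * u i + (s' * b) * v i)"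
    have "sparse n (k + l) (w s')" for s'
      unfolding w_def by (rule sparse_lincomb[OF u v])
    then have rip: "(1 - \<delta>) * (vnorm n (w s'))\<^sup>2 \<le> (vnorm m (mv A n (w s')))\<^sup>2"
      "(vnorm m (mv A n (w s')))\<^sup>2 \<le> (1 + \<delta>) * (vnorm n (w s'))\<^sup>2" for s'
      using rip_bounds unfolding \<delta>_def by blast+
    have "(vnorm n (w s'))\<^sup>2 = 2 * a\<^sup>2 * b\<^sup>2" if "s' = s \<or> s' = - s" for s'
      using that s unfolding w_def vnorm_lincomb_power2 \<open>vinner n u v = 0\<close> a_def b_def
      by (auto simp: power_mult_distrib)
    moreover have "(vnorm m (mv A n (w s')))\<^sup>2
        = a\<^sup>2 * (vnorm m (mv A n u))\<^sup>2 + 2 * a * b * s' * P + b\<^sup>2 * (vnorm m (mv A n v))\<^sup>2"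
      if "s' = s \<or> s' = - s" for s'
      using that s unfolding w_def mv_lincomb vnorm_lincomb_power2 P_def
      by (auto simp: power_mult_distrib)
    ultimately show ?thesis
      using rip(1)[of "- s"] rip(2)[of s] by (simp add: algebra_simps)
  qed
  have "a * b * P \<le> a * b * (\<delta> * a * b)" "a * b * (- P) \<le> a * b * (\<delta> * a * b)"
    using cross[of 1] cross[of "-1"] by (simp_all add: power2_eq_square ac_simps)
  then have "P \<le> \<delta> * a * b" "- P \<le> \<delta> * a * b"
    using \<open>a > 0\<close> \<open>b > 0\<close> by (metis mult_le_cancel_left_pos mult_pos_pos)+
  then show ?thesis unfolding P_def \<delta>_def a_def b_def by (simp add: ac_simps abs_le_iff)
qed

lemma rip_column_inner_disjoint:
  assumes i: "i < n" and w: "sparse n l w" "w i = 0"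
  shows "\<bar>vinner m (\<lambda>p. A p i) (mv A n w)\<bar> \<le> ric A m n (l + 1) * vnorm n w"
proof -
  define ei where "ei = (\<lambda>j. if j = i then 1 else (0::real))"
  have "mv A n ei = (\<lambda>p. A p i)"
    using i by (auto simp: mv_def ei_def if_distrib cong: if_cong)
  moreover have "vnorm n ei = 1"
    using i by (simp add: vnorm_def ei_def if_distrib if_distribR cong: if_cong)
  moreover have "sparse n 1 ei"
    using i by (intro sparse_if_supp_subset[of _ _ "{i}"]) (auto simp: ei_def supp_def)
  moreover have "\<forall>j. ei j = 0 \<or> w j = 0" using w(2) by (simp add: ei_def)
  ultimately show ?thesis
    using rip_inner_disjoint[of n 1 ei l w m A] w(1) by (simp add: add.commute)
qed

lemma alphaRIP_nonneg: "ric A m n (2 * k + 1) < 1 \<Longrightarrow> 0 \<le> alphaRIP A m n k"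
  unfolding alphaRIP_def using ric_lt_1_mono[of A m n "2 * k + 1" k] ric_nonneg[of A m n]
  by simp

lemma gammaRIP_nonneg: "ric A m n (2 * k + 1) < 1 \<Longrightarrow> 0 \<le> gammaRIP A m n k"
  unfolding gammaRIP_def using ric_lt_1_mono[of A m n "2 * k + 1" k] ric_nonneg[of A m n]
  by simp

section \<open>The Moore--Penrose pseudoinverse\<close>

definition penrose :: "nat set \<Rightarrow> nat set \<Rightarrow> (nat \<Rightarrow> nat \<Rightarrow> real) \<Rightarrow> (nat \<Rightarrow> nat \<Rightarrow> real) \<Rightarrow> bool" where
  "penrose I J M B \<longleftrightarrow> (\<forall>i l. \<not> (i \<in> J \<and> l \<in> I) \<longrightarrow> B i l = 0) \<and>
     (\<forall>i\<in>I. \<forall>l\<in>J. mmul I (mmul J M B) M i l = M i l) \<and>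
     (\<forall>i\<in>J. \<forall>l\<in>I. mmul J (mmul I B M) B i l = B i l) \<and>
     (\<forall>i\<in>I. \<forall>l\<in>I. mmul J M B i l = mmul J M B l i) \<and>
     (\<forall>i\<in>J. \<forall>l\<in>J. mmul I B M i l = mmul I B M l i)"

lemma pinv_eq_The_penrose: "pinv I J M = (THE B. penrose I J M B)"
  unfolding pinv_def penrose_def ..

lemma mmul_assoc: "mmul K (mmul J X Y) Z i l = mmul J X (mmul K Y Z) i l"
  unfolding mmul_def
  by (simp add: sum_distrib_left sum_distrib_right mult.assoc sum.swap[of _ K J])

lemma mmul_cong_left: "(\<And>j. j \<in> J \<Longrightarrow> X i j = X' i j) \<Longrightarrow> mmul J X Y i l = mmul J X' Y i l"
  unfolding mmul_def by simp

lemma mmul_cong_right: "(\<And>j. j \<in> J \<Longrightarrow> Y j l = Y' j l) \<Longrightarrow> mmul J X Y i l = mmul J X Y' i l"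
  unfolding mmul_def by simp

lemma mmul_symmetric_commute:
  assumes "\<forall>x\<in>J. \<forall>y\<in>J. X x y = X y x" "\<forall>x\<in>J. \<forall>y\<in>J. Y x y = Y y x" "p \<in> J" "q \<in> J"
  shows "mmul J X Y p q = mmul J Y X q p"
  unfolding mmul_def using assms by (intro sum.cong) auto

lemma penrose_range_projection:
  assumes "penrose I J M B" "q \<in> I"
  shows "mmul I (mmul J M B) (mmul J M C) q p = mmul J M C q p"
proof -
  have "mmul I (mmul J M B) (mmul J M C) q p = mmul J (mmul I (mmul J M B) M) C q p"
    by (simp add: mmul_assoc)
  also have "\<dots> = mmul J M C q p"
    using assms unfolding penrose_def by (intro mmul_cong_left) auto
  finally show ?thesis .
qed

lemma penrose_corange_projection:
  assumes "penrose I J M C" "q \<in> J"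
  shows "mmul J (mmul I B M) (mmul I C M) p q = mmul I B M p q"
proof -
  have "mmul J (mmul I B M) (mmul I C M) p q = mmul I B (mmul J M (mmul I C M)) p q"
    by (simp add: mmul_assoc)
  also have "\<dots> = mmul I B M p q"
  proof (rule mmul_cong_right)
    fix x assume "x \<in> I"
    have "mmul J M (mmul I C M) x q = mmul I (mmul J M C) M x q" by (simp add: mmul_assoc)
    also have "\<dots> = M x q" using assms \<open>x \<in> I\<close> unfolding penrose_def by auto
    finally show "mmul J M (mmul I C M) x q = M x q" .
  qed
  finally show ?thesis .
qed

lemma penrose_unique:
  assumes B: "penrose I J M B" and C: "penrose I J M C"
  shows "B = C"
proof -
  have MB: "mmul J M B p q = mmul J M C p q" if "p \<in> I" "q \<in> I" for p q
  proof -
    have "mmul J M B p q = mmul I (mmul J M C) (mmul J M B) p q"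
      using penrose_range_projection[OF C that(1)] by simp
    also have "\<dots> = mmul I (mmul J M B) (mmul J M C) q p"
      using B C that unfolding penrose_def by (intro mmul_symmetric_commute) auto
    also have "\<dots> = mmul J M C q p" using penrose_range_projection[OF B that(2)] by simp
    also have "\<dots> = mmul J M C p q" using C that unfolding penrose_def by auto
    finally show ?thesis .
  qed
  have BM: "mmul I B M p q = mmul I C M p q" if "p \<in> J" "q \<in> J" for p q
  proof -
    have "mmul I B M p q = mmul J (mmul I B M) (mmul I C M) p q"
      using penrose_corange_projection[OF C that(2)] by simp
    also have "\<dots> = mmul J (mmul I C M) (mmul I B M) q p"
      using B C that unfolding penrose_def by (intro mmul_symmetric_commute) auto
    also have "\<dots> = mmul I C M q p" using penrose_corange_projection[OF B that(1)] by simp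
    also have "\<dots> = mmul I C M p q" using C that unfolding penrose_def by auto
    finally show ?thesis .
  qed
  have "B i l = C i l" for i l
  proof (cases "i \<in> J \<and> l \<in> I")
    case False
    then show ?thesis using B C unfolding penrose_def by auto
  next
    case True
    have "B i l = mmul J (mmul I B M) B i l" using B True unfolding penrose_def by auto
    also have "\<dots> = mmul J (mmul I C M) B i l" by (rule mmul_cong_left) (use BM True in auto)
    also have "\<dots> = mmul I C (mmul J M B) i l" by (simp add: mmul_assoc)
    also have "\<dots> = mmul I C (mmul J M C) i l" by (rule mmul_cong_right) (use MB True in auto)
    also have "\<dots> = mmul J (mmul I C M) C i l" by (simp add: mmul_assoc)
    also have "\<dots> = C i l" using C True unfolding penrose_def by auto
    finally show ?thesis .
  qed
  then show ?thesis by (intro ext)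
qed

lemma penrose_pinv: "penrose I J M B \<Longrightarrow> penrose I J M (pinv I J M)"
  unfolding pinv_eq_The_penrose by (rule theI[of "penrose I J M"]) (auto intro: penrose_unique)

definition quad_form :: "nat set \<Rightarrow> (nat \<Rightarrow> nat \<Rightarrow> real) \<Rightarrow> (nat \<Rightarrow> real) \<Rightarrow> real" where
  "quad_form J G v = (\<Sum>i\<in>J. \<Sum>j\<in>J. v i * G i j * v j)"

definition pos_def_on :: "nat set \<Rightarrow> (nat \<Rightarrow> nat \<Rightarrow> real) \<Rightarrow> bool" where
  "pos_def_on J G \<longleftrightarrow> (\<forall>i\<in>J. \<forall>j\<in>J. G i j = G j i) \<and>
     (\<forall>v. (\<exists>i\<in>J. v i \<noteq> 0) \<longrightarrow> quad_form J G v > 0)"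

lemma quad_form_insert:
  assumes "finite J" "s \<notin> J" "\<forall>i\<in>insert s J. \<forall>j\<in>insert s J. G i j = G j i"
  shows "quad_form (insert s J) G v = v s * G s s * v s + 2 * v s * (\<Sum>j\<in>J. G s j * v j) + quad_form J G v"
proof -
  have "quad_form (insert s J) G v = (v s * G s s * v s + (\<Sum>j\<in>J. v s * G s j * v j))
       + (\<Sum>i\<in>J. v i * G i s * v s + (\<Sum>j\<in>J. v i * G i j * v j))"
    unfolding quad_form_def using assms(1,2) by simp
  also have "\<dots> = v s * G s s * v s + (\<Sum>j\<in>J. v s * G s j * v j)
       + (\<Sum>i\<in>J. v i * G i s * v s) + quad_form J G v"
    unfolding quad_form_def by (simp add: sum.distrib)
  also have "(\<Sum>i\<in>J. v i * G i s * v s) = (\<Sum>j\<in>J. v s * G s j * v j)"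
  proof (rule sum.cong[OF refl])
    fix i assume "i \<in> J"
    then have "G i s = G s i" using assms(3) by blast
    then show "v i * G i s * v s = v s * G s i * v i" by simp
  qed
  finally show ?thesis by (simp add: sum_distrib_left mult.assoc)
qed

lemma quad_form_Schur_complement:
  assumes "\<forall>i\<in>J. G i s = G s i"
  shows "quad_form J (\<lambda>i j. G i j - G i s * G s j / c) u
    = quad_form J G u - (\<Sum>j\<in>J. G s j * u j)\<^sup>2 / c"
proof -
  have "quad_form J (\<lambda>i j. G i j - G i s * G s j / c) u
      = quad_form J G u - (\<Sum>i\<in>J. \<Sum>j\<in>J. (u i * G i s) * (G s j * u j)) / c"
    unfolding quad_form_def by (simp add: algebra_simps sum_subtractf sum_divide_distrib)
  also have "(\<Sum>i\<in>J. \<Sum>j\<in>J. (u i * G i s) * (G s j * u j))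
      = (\<Sum>i\<in>J. u i * G i s) * (\<Sum>j\<in>J. G s j * u j)"
    by (simp add: sum_product)
  also have "(\<Sum>i\<in>J. u i * G i s) = (\<Sum>j\<in>J. G s j * u j)"
  proof (rule sum.cong[OF refl])
    fix i assume "i \<in> J"
    then show "u i * G i s = G s i * u i" using assms by simp
  qed
  finally show ?thesis by (simp add: power2_eq_square)
qed

lemma pos_def_on_Schur_complement:
  assumes fin: "finite J" and s: "s \<notin> J" and pd: "pos_def_on (insert s J) G"
  shows "G s s > 0" and "pos_def_on J (\<lambda>i j. G i j - G i s * G s j / G s s)"
proof -
  have sym: "\<forall>i\<in>insert s J. \<forall>j\<in>insert s J. G i j = G j i"
    and pos: "\<And>v. \<exists>i\<in>insert s J. v i \<noteq> 0 \<Longrightarrow> quad_form (insert s J) G v > 0"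
    using pd unfolding pos_def_on_def by blast+
  define c where "c = G s s"
  define e where "e = (\<lambda>i. if i = s then 1 else (0::real))"
  have "quad_form J G e = 0" "(\<Sum>j\<in>J. G s j * e j) = 0"
    unfolding quad_form_def e_def using s by (auto intro!: sum.neutral)
  then show "G s s > 0"
    using pos[of e] quad_form_insert[OF fin s sym, of e] by (simp add: e_def)
  then have "c > 0" by (simp add: c_def)
  define G' where "G' = (\<lambda>i j. G i j - G i s * G s j / c)"
  have "\<forall>i\<in>J. \<forall>j\<in>J. G' i j = G' j i"
  proof (intro ballI)
    fix i j assume "i \<in> J" "j \<in> J"
    then have "G i j = G j i" "G i s = G s i" "G j s = G s j" using sym by blast+
    then show "G' i j = G' j i" unfolding G'_def by simp
  qed
  moreover have "quad_form J G' u > 0" if "\<exists>i\<in>J. u i \<noteq> 0" for u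
  proof -
    define b where "b = (\<Sum>j\<in>J. G s j * u j)"
    define u' where "u' = (\<lambda>i. if i = s then - b / c else u i)"
    have "\<forall>i\<in>J. G i s = G s i" using sym by blast
    then have "quad_form J G' u = quad_form J G u - b\<^sup>2 / c"
      unfolding G'_def b_def by (rule quad_form_Schur_complement)
    moreover have "(\<Sum>j\<in>J. G s j * u' j) = b" "quad_form J G u' = quad_form J G u"
      unfolding b_def u'_def quad_form_def using s by (auto intro!: sum.cong)
    then have "quad_form (insert s J) G u' = quad_form J G u - b\<^sup>2 / c"
      using quad_form_insert[OF fin s sym, of u'] \<open>c > 0\<close>
      by (simp add: u'_def c_def field_simps power2_eq_square)
    moreover have "quad_form (insert s J) G u' > 0"
      using that s by (intro pos) (auto simp: u'_def)
    ultimately show ?thesis by simp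
  qed
  ultimately show "pos_def_on J (\<lambda>i j. G i j - G i s * G s j / G s s)"
    unfolding pos_def_on_def G'_def c_def by blast
qed

lemma pos_def_on_solvable:
  assumes "finite J" and "pos_def_on J G"
  shows "\<exists>v. \<forall>i\<in>J. (\<Sum>j\<in>J. G i j * v j) = w i"
  using assms
proof (induction J arbitrary: G w rule: finite_induct)
  case empty
  then show ?case by simp
next
  case (insert s J)
  define c where "c = G s s"
  define G' where "G' = (\<lambda>i j. G i j - G i s * G s j / c)"
  have "c > 0" "pos_def_on J G'"
    using pos_def_on_Schur_complement[OF insert.hyps insert.prems] unfolding c_def G'_def by auto
  then obtain v' where v': "\<forall>i\<in>J. (\<Sum>j\<in>J. G' i j * v' j) = w i - G i s * w s / c"
    using insert.IH[OF \<open>pos_def_on J G'\<close>, of "\<lambda>i. w i - G i s * w s / c"] by blast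
  define v where "v = v'(s := (w s - (\<Sum>j\<in>J. G s j * v' j)) / c)"
  have split: "(\<Sum>j\<in>insert s J. G i j * v j) = G i s * v s + (\<Sum>j\<in>J. G i j * v' j)" for i
    using insert.hyps unfolding v_def by (auto intro!: sum.cong)
  have vs: "v s = (w s - (\<Sum>j\<in>J. G s j * v' j)) / c"
    by (simp add: v_def)
  have "(\<Sum>j\<in>insert s J. G i j * v j) = w i" if "i \<in> insert s J" for i
  proof (cases "i = s")
    case True
    then show ?thesis using split[of s] vs \<open>c > 0\<close> by (simp add: c_def field_simps)
  next
    case False
    then have "i \<in> J" using that by simp
    have "w i - G i s * w s / c = (\<Sum>j\<in>J. G' i j * v' j)"
      using v' \<open>i \<in> J\<close> by simp
    also have "\<dots> = (\<Sum>j\<in>J. G i j * v' j) - G i s / c * (\<Sum>j\<in>J. G s j * v' j)"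
      unfolding G'_def by (simp add: algebra_simps sum_subtractf sum_distrib_left)
    finally have Gv': "(\<Sum>j\<in>J. G i j * v' j) = w i - G i s * w s / c + G i s / c * (\<Sum>j\<in>J. G s j * v' j)"
      by simp
    show ?thesis unfolding split vs Gv' using \<open>c > 0\<close> by (simp add: field_simps)
  qed
  then show ?case by blast
qed

lemma pos_def_on_inverse:
  assumes fin: "finite J" and pd: "pos_def_on J G"
  obtains H where "\<And>i q. i \<in> J \<Longrightarrow> (\<Sum>j\<in>J. G i j * H j q) = (if i = q then 1 else 0)"
    and "\<And>a b. a \<in> J \<Longrightarrow> b \<in> J \<Longrightarrow> H a b = H b a"
proof -
  have sym: "G i j = G j i" if "i \<in> J" "j \<in> J" for i j
    using pd that unfolding pos_def_on_def by blast
  have "\<forall>q. \<exists>v. \<forall>i\<in>J. (\<Sum>j\<in>J. G i j * v j) = (if i = q then 1 else 0)"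
    by (intro allI pos_def_on_solvable[OF fin pd])
  then obtain V where V: "\<And>q i. i \<in> J \<Longrightarrow> (\<Sum>j\<in>J. G i j * V q j) = (if i = q then 1 else 0)"
    by metis
  define H where "H = (\<lambda>i q. V q i)"
  have GH: "(\<Sum>j\<in>J. G i j * H j q) = (if i = q then 1 else 0)" if "i \<in> J" for i q
    using V that unfolding H_def by blast
  have "H a b = H b a" if ab: "a \<in> J" "b \<in> J" for a b
  proof -
    have "H b a = (\<Sum>j\<in>J. H j a * (\<Sum>i\<in>J. G j i * H i b))"
      using ab fin by (simp add: GH if_distrib cong: if_cong)
    also have "\<dots> = (\<Sum>i\<in>J. (\<Sum>j\<in>J. G i j * H j a) * H i b)"
      unfolding sum_distrib_left sum_distrib_right
      by (subst sum.swap) (intro sum.cong refl, simp add: sym)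
    also have "\<dots> = H a b"
      using ab fin by (simp add: GH if_distrib if_distribR cong: if_cong)
    finally show ?thesis by simp
  qed
  with GH show ?thesis using that by blast
qed

lemma penrose_of_left_inverse:
  assumes fJ: "finite J"
    and zero: "\<And>i l. \<not> (i \<in> J \<and> l \<in> I) \<Longrightarrow> B i l = 0"
    and left: "\<And>i l. i \<in> J \<Longrightarrow> l \<in> J \<Longrightarrow> mmul I B M i l = (if i = l then 1 else 0)"
    and sym: "\<And>i l. i \<in> I \<Longrightarrow> l \<in> I \<Longrightarrow> mmul J M B i l = mmul J M B l i"
  shows "penrose I J M B"
  unfolding penrose_def
proof (intro conjI ballI allI impI)
  fix i l assume il: "i \<in> I" "l \<in> J"
  have "mmul I (mmul J M B) M i l = mmul J M (mmul I B M) i l" by (simp add: mmul_assoc)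
  also have "\<dots> = M i l"
    unfolding mmul_def[of J M] using il fJ by (simp add: left if_distrib cong: if_cong)
  finally show "mmul I (mmul J M B) M i l = M i l" .
next
  fix i l assume "i \<in> J" "l \<in> I"
  then show "mmul J (mmul I B M) B i l = B i l"
    unfolding mmul_def[of J] using fJ by (simp add: left if_distrib if_distribR cong: if_cong)
qed (use zero left sym in auto)

lemma penrose_exists:
  assumes fI: "finite I" and fJ: "finite J" and pd: "pos_def_on J (mmul I (\<lambda>i p. M p i) M)"
  shows "\<exists>B. penrose I J M B"
proof -
  define G where "G = mmul I (\<lambda>i p. M p i) M"
  have Gsym: "G i j = G j i" for i j unfolding G_def mmul_def by (simp add: mult.commute)
  obtain H where GH: "\<And>i q. i \<in> J \<Longrightarrow> (\<Sum>j\<in>J. G i j * H j q) = (if i = q then 1 else 0)"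
    and Hsym: "\<And>a b. a \<in> J \<Longrightarrow> b \<in> J \<Longrightarrow> H a b = H b a"
    using pos_def_on_inverse[OF fJ pd[folded G_def]] by blast
  define B where "B = (\<lambda>i l. if i \<in> J \<and> l \<in> I then (\<Sum>j\<in>J. H i j * M l j) else 0)"
  have "penrose I J M B"
  proof (rule penrose_of_left_inverse[OF fJ])
    fix i l assume "\<not> (i \<in> J \<and> l \<in> I)"
    then show "B i l = 0" unfolding B_def by auto
  next
    fix i l assume il: "i \<in> J" "l \<in> J"
    have "mmul I B M i l = (\<Sum>j\<in>J. H i j * G j l)"
      unfolding mmul_def B_def G_def using il
      by (simp add: sum_distrib_left sum_distrib_right mult.assoc sum.swap[of _ I J])
    also have "\<dots> = (\<Sum>j\<in>J. G l j * H j i)"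
      using il by (intro sum.cong refl) (simp add: Hsym Gsym[of l])
    finally show "mmul I B M i l = (if i = l then 1 else 0)" using GH[OF il(2)] by auto
  next
    fix i l assume il: "i \<in> I" "l \<in> I"
    have "mmul J M B i l = (\<Sum>j\<in>J. \<Sum>j'\<in>J. M i j * H j j' * M l j')"
      unfolding mmul_def B_def using il by (simp add: sum_distrib_left mult.assoc)
    also have "\<dots> = (\<Sum>j'\<in>J. \<Sum>j\<in>J. M l j' * H j' j * M i j)"
      by (subst sum.swap) (intro sum.cong refl, simp add: Hsym[of _ j' for j'])
    also have "\<dots> = mmul J M B l i"
      unfolding mmul_def B_def using il by (simp add: sum_distrib_left mult.assoc)
    finally show "mmul J M B i l = mmul J M B l i" .
  qed
  then show ?thesis by blast
qed

text \<open>These are the normal equations \<open>M\<^sup>T (M B y - y) = 0\<close>; they only use that \<open>M B\<close> is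
  symmetric and \<open>M B M = M\<close>.\<close>
lemma penrose_normal_equations:
  assumes P: "penrose I J M B" and fI: "finite I" and fJ: "finite J" and j: "j \<in> J"
  shows "(\<Sum>p\<in>I. M p j * ((\<Sum>j'\<in>J. M p j' * (\<Sum>p'\<in>I. B j' p' * y p')) - y p)) = 0"
proof -
  define MB where "MB = mmul J M B"
  have "(\<Sum>p\<in>I. M p j * (\<Sum>j'\<in>J. M p j' * (\<Sum>p'\<in>I. B j' p' * y p')))
      = (\<Sum>p'\<in>I. (\<Sum>p\<in>I. MB p' p * M p j) * y p')"
  proof -
    have "(\<Sum>p\<in>I. M p j * (\<Sum>j'\<in>J. M p j' * (\<Sum>p'\<in>I. B j' p' * y p')))
        = (\<Sum>p'\<in>I. \<Sum>p\<in>I. M p j * MB p p' * y p')"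
      unfolding MB_def mmul_def sum_distrib_left sum_distrib_right
      by (subst sum.swap, simp add: ac_simps sum.swap[of _ J I])
    also have "\<dots> = (\<Sum>p'\<in>I. (\<Sum>p\<in>I. MB p' p * M p j) * y p')"
      unfolding sum_distrib_right
      using P unfolding penrose_def MB_def by (intro sum.cong refl) (simp add: mult.commute)
    finally show ?thesis .
  qed
  also have "\<dots> = (\<Sum>p'\<in>I. M p' j * y p')"
    using P j unfolding penrose_def MB_def mmul_def[of I] by (intro sum.cong refl) auto
  finally show ?thesis by (simp add: right_diff_distrib sum_subtractf)
qed

section \<open>Least squares on a support\<close>

lemma gram_pos_def_on:
  assumes S: "S \<subseteq> {..<n}" and card: "card S \<le> l" and ric: "ric A m n l < 1"
  shows "pos_def_on S (mmul {..<m} (\<lambda>i p. A p i) A)"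
  unfolding pos_def_on_def
proof (intro conjI allI impI ballI)
  fix i j show "mmul {..<m} (\<lambda>i p. A p i) A i j = mmul {..<m} (\<lambda>i p. A p i) A j i"
    unfolding mmul_def by (simp add: mult.commute)
next
  fix v :: "nat \<Rightarrow> real" assume "\<exists>i\<in>S. v i \<noteq> 0"
  define v' where "v' = (\<lambda>i. if i \<in> S then v i else 0)"
  have mv': "mv A n v' p = (\<Sum>j\<in>S. A p j * v j)" for p
    using mv_eq_sum_on[OF S, of v' A p] unfolding v'_def by simp
  have "quad_form S (mmul {..<m} (\<lambda>i p. A p i) A) v
      = (\<Sum>p<m. \<Sum>i\<in>S. \<Sum>j\<in>S. (A p i * v i) * (A p j * v j))"
    unfolding quad_form_def mmul_def sum_distrib_left sum_distrib_right
    by (subst sum.swap, subst (2) sum.swap) (simp add: ac_simps)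
  also have "\<dots> = (vnorm m (mv A n v'))\<^sup>2"
    unfolding vnorm_power2 mv' by (simp add: power2_eq_square sum_product)
  finally have quad: "quad_form S (mmul {..<m} (\<lambda>i p. A p i) A) v = (vnorm m (mv A n v'))\<^sup>2" .
  have "sparse n l v'"
    using S card by (rule sparse_if_zero_outside) (simp add: v'_def)
  then have "(1 - ric A m n l) * (vnorm n v')\<^sup>2 \<le> (vnorm m (mv A n v'))\<^sup>2"
    using rip_bounds by blast
  moreover have "vnorm n v' \<noteq> 0"
    using \<open>\<exists>i\<in>S. v i \<noteq> 0\<close> S unfolding vnorm_eq_0_iff v'_def by auto
  then have "0 < (1 - ric A m n l) * (vnorm n v')\<^sup>2"
    using ric by simp
  ultimately show "quad_form S (mmul {..<m} (\<lambda>i p. A p i) A) v > 0"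
    unfolding quad by linarith
qed

lemma lsq_zero_outside: "j \<notin> S \<Longrightarrow> lsq A m S y j = 0"
  unfolding lsq_def by simp

lemma lsq_normal_equations:
  assumes S: "S \<subseteq> {..<n}" and "card S \<le> l" and "ric A m n l < 1" and j: "j \<in> S"
  shows "mtv A m (\<lambda>p. mv A n (lsq A m S y) p - y p) j = 0"
proof -
  have fin: "finite S" using S finite_subset by blast
  obtain B where "penrose {..<m} S A B"
    using penrose_exists[OF finite_lessThan fin gram_pos_def_on[OF assms(1-3)]] by blast
  then have P: "penrose {..<m} S A (pinv {..<m} S A)" by (rule penrose_pinv)
  have "mv A n (lsq A m S y) p = (\<Sum>j'\<in>S. A p j' * (\<Sum>p'<m. pinv {..<m} S A j' p' * y p'))" for p
  proof -
    have "mv A n (lsq A m S y) p = (\<Sum>j'\<in>S. A p j' * lsq A m S y j')"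
      by (rule mv_eq_sum_on[OF S]) (rule lsq_zero_outside)
    also have "\<dots> = (\<Sum>j'\<in>S. A p j' * (\<Sum>p'<m. pinv {..<m} S A j' p' * y p'))"
      by (intro sum.cong) (auto simp: lsq_def)
    finally show ?thesis .
  qed
  then show ?thesis
    unfolding mtv_def using penrose_normal_equations[OF P finite_lessThan fin j, of y] by simp
qed

lemma lsq_residual_orthogonal:
  assumes "S \<subseteq> {..<n}" and "card S \<le> l" and "ric A m n l < 1" and "\<And>j. j \<notin> S \<Longrightarrow> u j = 0"
  shows "vinner m (mv A n u) (\<lambda>p. mv A n (lsq A m S y) p - y p) = 0"
  unfolding vinner_mv_left using lsq_normal_equations[OF assms(1-3)] assms(4)
  by (intro sum.neutral) (metis mult_eq_0_iff)

lemma lsq_minimal: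
  assumes "S \<subseteq> {..<n}" and "card S \<le> l" and "ric A m n l < 1" and "\<And>j. j \<notin> S \<Longrightarrow> z j = 0"
  shows "vnorm m (\<lambda>p. mv A n (lsq A m S y) p - y p) \<le> vnorm m (\<lambda>p. mv A n z p - y p)"
proof -
  define x where "x = lsq A m S y"
  define r where "r = (\<lambda>p. mv A n x p - y p)"
  define u where "u = (\<lambda>j. z j - x j)"
  have "vinner m (mv A n u) r = 0"
    unfolding r_def x_def using assms
    by (intro lsq_residual_orthogonal) (auto simp: u_def x_def lsq_zero_outside)
  moreover have "(\<lambda>p. mv A n z p - y p) = (\<lambda>p. 1 * mv A n u p + 1 * r p)"
    unfolding u_def r_def mv_diff by simp
  ultimately have "(vnorm m (\<lambda>p. mv A n z p - y p))\<^sup>2 = (vnorm m (mv A n u))\<^sup>2 + (vnorm m r)\<^sup>2"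
    using vnorm_lincomb_power2[of m 1 "mv A n u" 1 r] by simp
  then have "(vnorm m r)\<^sup>2 \<le> (vnorm m (\<lambda>p. mv A n z p - y p))\<^sup>2" by simp
  then show ?thesis unfolding r_def x_def by (rule power2_le_imp_le) simp
qed

text \<open>Split \<open>x - x\<^sup>*\<close> into \<open>h\<^sub>S\<close> on \<open>S\<close> and \<open>h\<^sub>c\<close> off \<open>S\<close>. The residual is orthogonal to \<open>A h\<^sub>S\<close>, so
  \<open>\<parallel>A h\<^sub>S\<parallel>\<^sup>2 = \<langle>A h\<^sub>S, e - A h\<^sub>c\<rangle>\<close>, and the cross term is controlled by \<open>\<delta>\<^sub>2\<^sub>k\<close>.\<close>
lemma lsq_error_on_support:
  fixes A :: "nat \<Rightarrow> nat \<Rightarrow> real" and m n k :: nat and xs e y :: "nat \<Rightarrow> real" and S :: "nat set"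
  defines "x \<equiv> lsq A m S y"
  assumes y: "y = (\<lambda>p. mv A n xs p + e p)" and xs: "sparse n k xs"
    and S: "S \<subseteq> {..<n}" "card S \<le> k" and ric: "ric A m n k < 1"
  shows "vnorm n (\<lambda>j. if j \<in> S then x j - xs j else 0)
    \<le> (ric A m n (2 * k) * vnorm n xs + sqrt (1 + ric A m n k) * vnorm m e) / (1 - ric A m n k)"
proof -
  define d1 where "d1 = ric A m n k"
  define d2 where "d2 = ric A m n (2 * k)"
  define hS where "hS = (\<lambda>j. if j \<in> S then x j - xs j else 0)"
  define hc where "hc = (\<lambda>j. if j \<in> S then 0 else - xs j)"
  have "x j - xs j = 1 * hS j + 1 * hc j" for j
    unfolding hS_def hc_def x_def using lsq_zero_outside by auto
  then have residual: "mv A n x p - y p = mv A n hS p + mv A n hc p - e p" for p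
    unfolding y using mv_diff[of A n x xs p] mv_lincomb[of A n 1 hS 1 hc p] by simp
  have hS: "sparse n k hS" using S by (rule sparse_if_zero_outside) (simp add: hS_def)
  have hc: "sparse n k hc" unfolding hc_def using xs by (rule sparse_neg_masked)
  have disjoint: "\<forall>j. hS j = 0 \<or> hc j = 0" by (simp add: hS_def hc_def)
  have "0 \<le> d1" "0 \<le> d2" unfolding d1_def d2_def by (rule ric_nonneg)+
  have "vinner m (mv A n hS) (\<lambda>p. mv A n x p - y p) = 0"
    unfolding x_def using S ric by (intro lsq_residual_orthogonal) (auto simp: hS_def)
  then have "(vnorm m (mv A n hS))\<^sup>2 = vinner m (mv A n hS) e - vinner m (mv A n hS) (mv A n hc)"
    unfolding vinner_self[symmetric] vinner_def residual
    by (simp add: algebra_simps sum_subtractf sum.distrib)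
  also have "\<dots> \<le> vnorm m (mv A n hS) * vnorm m e + d2 * vnorm n hS * vnorm n hc"
    using vinner_Cauchy_Schwarz[of m "mv A n hS" e] rip_inner_disjoint[OF hS hc disjoint, of m A]
    unfolding d2_def mult_2 abs_le_iff by linarith
  also have "\<dots> \<le> vnorm n hS * (sqrt (1 + d1) * vnorm m e + d2 * vnorm n xs)"
  proof -
    have "vnorm m (mv A n hS) * vnorm m e \<le> sqrt (1 + d1) * vnorm n hS * vnorm m e"
      unfolding d1_def by (rule mult_right_mono[OF rip_upper_norm[OF hS]]) simp
    moreover have "d2 * vnorm n hS * vnorm n hc \<le> d2 * vnorm n hS * vnorm n xs"
      using \<open>0 \<le> d2\<close> by (intro mult_left_mono vnorm_mono) (auto simp: hc_def)
    ultimately show ?thesis by (simp add: algebra_simps)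
  qed
  finally have "(1 - d1) * vnorm n hS * vnorm n hS \<le> vnorm n hS * (sqrt (1 + d1) * vnorm m e + d2 * vnorm n xs)"
    using rip_bounds[OF hS, of A m] unfolding d1_def by (simp add: power2_eq_square)
  then have "(1 - d1) * vnorm n hS \<le> d2 * vnorm n xs + sqrt (1 + d1) * vnorm m e"
    using vnorm_nonneg[of n hS] \<open>0 \<le> d1\<close> \<open>0 \<le> d2\<close>
    by (cases "vnorm n hS = 0") (auto simp: mult.commute)
  then show ?thesis
    using ric unfolding hS_def d1_def d2_def by (simp add: field_simps)
qed

text \<open>Write \<open>x - x\<^sup>* = w - x\<^sup>*\<^sub>i e\<^sub>i\<close> with \<open>w\<^sub>i = 0\<close>: for a unit column \<open>A e\<^sub>i\<close> the \<open>i\<close>-th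
  gradient entry is \<open>\<langle>A e\<^sub>i, A w\<rangle> - x\<^sup>*\<^sub>i - \<langle>A e\<^sub>i, e\<rangle>\<close>.\<close>
lemma gradient_entry_bound:
  fixes A :: "nat \<Rightarrow> nat \<Rightarrow> real" and x xs e y :: "nat \<Rightarrow> real" and i :: nat
  defines "w \<equiv> (\<lambda>j. if j = i then 0 else x j - xs j)"
  assumes y: "y = (\<lambda>p. mv A n xs p + e p)" and i: "i < n" "x i = 0"
    and unit: "vnorm m (\<lambda>p. A p i) = 1" and w: "sparse n l w"
  shows "\<bar>mtv A m (\<lambda>p. mv A n x p - y p) i + xs i\<bar> \<le> ric A m n (l + 1) * vnorm n w + vnorm m e"
proof -
  define ei where "ei = (\<lambda>j. if j = i then 1 else (0::real))"
  have "x j - xs j = 1 * w j + (- xs i) * ei j" for j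
    unfolding w_def ei_def using i by auto
  moreover have "mv A n ei = (\<lambda>p. A p i)"
    using i by (auto simp: mv_def ei_def if_distrib cong: if_cong)
  ultimately have residual: "mv A n x p - y p = mv A n w p - xs i * A p i - e p" for p
    unfolding y using mv_diff[of A n x xs p] mv_lincomb[of A n 1 w "- xs i" ei p] by simp
  have "mtv A m (\<lambda>p. mv A n x p - y p) i
      = vinner m (\<lambda>p. A p i) (mv A n w) - xs i * vinner m (\<lambda>p. A p i) (\<lambda>p. A p i)
        - vinner m (\<lambda>p. A p i) e"
    unfolding mtv_def vinner_def residual
    by (simp add: algebra_simps sum_subtractf sum_distrib_left sum.distrib)
  then have "mtv A m (\<lambda>p. mv A n x p - y p) i + xs i
      = vinner m (\<lambda>p. A p i) (mv A n w) - vinner m (\<lambda>p. A p i) e"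
    unfolding vinner_self unit by simp
  moreover have "\<bar>vinner m (\<lambda>p. A p i) (mv A n w)\<bar> \<le> ric A m n (l + 1) * vnorm n w"
    using i(1) w by (rule rip_column_inner_disjoint) (simp add: w_def)
  moreover have "\<bar>vinner m (\<lambda>p. A p i) e\<bar> \<le> vnorm m e"
    using vinner_Cauchy_Schwarz[of m "\<lambda>p. A p i" e] unit by simp
  ultimately show ?thesis by (simp add: abs_le_iff)
qed

lemma lsq_gradient_off_support:
  fixes A :: "nat \<Rightarrow> nat \<Rightarrow> real" and m n k :: nat and xs e y :: "nat \<Rightarrow> real" and S :: "nat set"
  defines "x \<equiv> lsq A m S y"
  assumes y: "y = (\<lambda>p. mv A n xs p + e p)" and xs: "sparse n k xs"
    and S: "S \<subseteq> {..<n}" "card S \<le> k" and ric: "ric A m n (2 * k + 1) < 1"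
    and i: "i < n" "i \<notin> S" and unit: "vnorm m (\<lambda>p. A p i) = 1"
  shows "\<bar>mtv A m (\<lambda>p. mv A n x p - y p) i + xs i\<bar>
    \<le> alphaRIP A m n k * vnorm n xs + gammaRIP A m n k * vnorm m e"
proof -
  define d1 where "d1 = ric A m n k"
  define d2 where "d2 = ric A m n (2 * k)"
  define d3 where "d3 = ric A m n (2 * k + 1)"
  have "d1 < 1" using ric_lt_1_mono[OF ric] unfolding d1_def by simp
  have "0 \<le> d3" unfolding d3_def by (rule ric_nonneg)
  define hS where "hS = (\<lambda>j. if j \<in> S then x j - xs j else 0)"
  define hc where "hc = (\<lambda>j. if j \<in> S \<or> j = i then 0 else - xs j)"
  have "x i = 0" unfolding x_def using i(2) by (rule lsq_zero_outside)
  have w: "(\<lambda>j. if j = i then 0 else x j - xs j) = (\<lambda>j. 1 * hS j + 1 * hc j)"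
    unfolding hS_def hc_def x_def using i(2) lsq_zero_outside by fastforce
  have "sparse n (k + k) (\<lambda>j. 1 * hS j + 1 * hc j)"
  proof (rule sparse_lincomb)
    show "sparse n k hS" using S by (rule sparse_if_zero_outside) (simp add: hS_def)
    show "sparse n k hc" unfolding hc_def using xs by (rule sparse_neg_masked)
  qed
  then have "\<bar>mtv A m (\<lambda>p. mv A n x p - y p) i + xs i\<bar>
      \<le> d3 * vnorm n (\<lambda>j. 1 * hS j + 1 * hc j) + vnorm m e"
    using gradient_entry_bound[where x = x and xs = xs and i = i, OF y i(1) \<open>x i = 0\<close> unit] unfolding w d3_def by (simp add: mult_2)
  also have "\<dots> \<le> d3 * ((d2 * vnorm n xs + sqrt (1 + d1) * vnorm m e) / (1 - d1) + vnorm n xs)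
      + vnorm m e"
  proof -
    have "vnorm n (\<lambda>j. 1 * hS j + 1 * hc j) \<le> vnorm n hS + vnorm n hc"
      using vnorm_triangle[of n hS hc] by simp
    moreover have "vnorm n hc \<le> vnorm n xs"
      unfolding hc_def by (rule vnorm_mono) auto
    moreover have "vnorm n hS \<le> (d2 * vnorm n xs + sqrt (1 + d1) * vnorm m e) / (1 - d1)"
      using lsq_error_on_support[OF y xs S] \<open>d1 < 1\<close>
      unfolding hS_def x_def d1_def d2_def by blast
    ultimately show ?thesis using \<open>0 \<le> d3\<close> by (simp add: mult_left_mono)
  qed
  also have "\<dots> = alphaRIP A m n k * vnorm n xs + gammaRIP A m n k * vnorm m e"
    unfolding alphaRIP_def gammaRIP_def d1_def[symmetric] d2_def[symmetric] d3_def[symmetric]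
    by (simp add: algebra_simps add_divide_distrib)
  finally show ?thesis .
qed

section \<open>Selecting the largest entries\<close>

lemma card_top_ranked_le:
  fixes f :: "'a \<Rightarrow> 'b::linorder"
  assumes "finite A" and "inj_on f A"
  shows "card {i\<in>A. card {j\<in>A. f i < f j} < k} \<le> k"
proof (cases "{i\<in>A. card {j\<in>A. f i < f j} < k} = {}")
  case False
  define L where "L = {i\<in>A. card {j\<in>A. f i < f j} < k}"
  have "finite L" "L \<subseteq> A" using assms(1) by (auto simp: L_def)
  have "Min (f ` L) \<in> f ` L" using \<open>finite L\<close> False by (simp add: L_def)
  then obtain i0 where i0: "i0 \<in> L" "f i0 = Min (f ` L)" by auto
  have "L - {i0} \<subseteq> {j\<in>A. f i0 < f j}"
  proof
    fix j assume j: "j \<in> L - {i0}"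
    then have "f i0 \<le> f j" using i0(2) \<open>finite L\<close> by simp
    moreover have "f i0 \<noteq> f j"
      using j i0(1) \<open>L \<subseteq> A\<close> assms(2) by (auto dest: inj_onD)
    ultimately show "j \<in> {j\<in>A. f i0 < f j}" using j \<open>L \<subseteq> A\<close> by auto
  qed
  then have "card (L - {i0}) \<le> card {j\<in>A. f i0 < f j}"
    using assms(1) by (intro card_mono) auto
  moreover have "card {j\<in>A. f i0 < f j} < k" using i0(1) by (simp add: L_def)
  ultimately show ?thesis using \<open>finite L\<close> i0(1) unfolding L_def[symmetric] by simp
next
  case True
  then show ?thesis by (simp only: card.empty le0)
qed

lemma exists_ranked_above_outside:
  fixes f :: "'a \<Rightarrow> 'b::linorder"
  assumes "finite A" and "i \<in> T" and "finite T" and "card T \<le> k"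
    and "k \<le> card {j\<in>A. f i < f j}"
  shows "\<exists>j\<in>A - T. f i < f j"
proof (rule ccontr)
  assume "\<not> ?thesis"
  then have "{j\<in>A. f i < f j} \<subseteq> T - {i}" by auto
  then have "card {j\<in>A. f i < f j} \<le> card (T - {i})"
    using assms(3) by (intro card_mono) auto
  moreover have "card (T - {i}) < card T"
    using assms(2,3) by (rule card_Diff1_less[rotated])
  ultimately show False using assms(4,5) by linarith
qed

lemma largest_eq_lex:
  "largest n k v = {i\<in>{..<n}. card {j\<in>{..<n}. (\<bar>v i\<bar>, i) < (\<bar>v j\<bar>, j)} < k}"
proof -
  have "(\<bar>v i\<bar>, i) < (\<bar>v j\<bar>, j) \<longleftrightarrow> \<bar>v j\<bar> > \<bar>v i\<bar> \<or> (\<bar>v j\<bar> = \<bar>v i\<bar> \<and> j > i)" for i j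
    by (auto simp: less_prod_def')
  then show ?thesis unfolding largest_def by simp
qed

lemma largest_subset: "largest n k v \<subseteq> {..<n}"
  unfolding largest_def by blast

lemma card_largest: "card (largest n k v) \<le> k"
  unfolding largest_eq_lex by (rule card_top_ranked_le) (auto simp: inj_on_def)

lemma not_in_largest_dominated:
  assumes "i < n" and "i \<notin> largest n k v" and "i \<in> T" and "finite T" and "card T \<le> k"
  shows "\<exists>j<n. j \<notin> T \<and> \<bar>v i\<bar> \<le> \<bar>v j\<bar>"
proof -
  have "k \<le> card {j\<in>{..<n}. (\<bar>v i\<bar>, i) < (\<bar>v j\<bar>, j)}"
    using assms(1,2) unfolding largest_eq_lex by auto
  then obtain j where "j \<in> {..<n} - T" "(\<bar>v i\<bar>, i) < (\<bar>v j\<bar>, j)"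
    using exists_ranked_above_outside[OF finite_lessThan assms(3-5), where f = "\<lambda>j. (\<bar>v j\<bar>, j)"]
    by blast
  then show ?thesis by auto
qed

section \<open>Exploration of the support\<close>

lemma unselected_count_bound:
  fixes Z :: "nat \<Rightarrow> real" and selected :: "nat \<Rightarrow> bool"
  assumes keep: "\<And>t. selected t \<Longrightarrow> Z t \<le> Z (Suc t)"
    and gain: "\<And>t. \<not> selected t \<Longrightarrow> Z t + c \<le> Z (Suc t)"
    and start: "- B \<le> Z 0"
    and cap: "\<And>t. \<not> selected t \<Longrightarrow> Z t \<le> B + real t * d"
    and "0 < c" and "0 \<le> d" and "0 \<le> B"
  shows "c * (\<Sum>s<t. of_bool (\<not> selected s)) \<le> 2 * B + real t * d + c"
proof -
  have lower: "- B + c * (\<Sum>s<t. of_bool (\<not> selected s)) \<le> Z t" for t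
  proof (induction t)
    case 0
    then show ?case using start by simp
  next
    case (Suc t)
    then show ?case
      using keep[of t] gain[of t] by (cases "selected t") (auto simp: algebra_simps)
  qed
  show ?thesis
  proof (induction t)
    case 0
    then show ?case using \<open>0 < c\<close> \<open>0 \<le> B\<close> by simp
  next
    case (Suc t)
    show ?case
    proof (cases "selected t")
      case True
      then show ?thesis using Suc \<open>0 \<le> d\<close> by (simp add: algebra_simps)
    next
      case False
      then have "- B + c * (\<Sum>s<t. of_bool (\<not> selected s)) \<le> B + real t * d"
        using lower[of t] cap[of t] by linarith
      then show ?thesis using False \<open>0 \<le> d\<close> by (simp add: algebra_simps)
    qed
  qed
qed

text \<open>Every round in which some index of \<open>I\<close> is unselected is counted for one of at most \<open>k\<close>
  indices, and each index is unselected in at most \<open>(2B + u d + c) / c\<close> of the first \<open>u\<close> rounds.\<close>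
lemma unselected_rounds_bound:
  fixes Z :: "nat \<Rightarrow> nat \<Rightarrow> real" and St :: "nat \<Rightarrow> nat set"
  assumes fin: "finite I" and card: "card I \<le> k"
    and keep: "\<And>i t. i \<in> I \<Longrightarrow> i \<in> St t \<Longrightarrow> Z t i \<le> Z (Suc t) i"
    and gain: "\<And>i t. i \<in> I \<Longrightarrow> i \<notin> St t \<Longrightarrow> Z t i + c \<le> Z (Suc t) i"
    and start: "\<And>i. i \<in> I \<Longrightarrow> - B \<le> Z 0 i"
    and cap: "\<And>i t. i \<in> I \<Longrightarrow> i \<notin> St t \<Longrightarrow> Z t i \<le> B + real t * d"
    and "0 < c" and "0 \<le> d" and "0 \<le> B"
    and missed: "\<And>s. s < u \<Longrightarrow> \<not> I \<subseteq> St s"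
  shows "c * real u \<le> real k * (2 * B + real u * d + c)"
proof -
  have "real u = (\<Sum>s<u. 1)" by simp
  also have "\<dots> \<le> (\<Sum>s<u. \<Sum>i\<in>I. of_bool (i \<notin> St s))"
  proof (rule sum_mono)
    fix s assume "s \<in> {..<u}"
    then obtain i where "i \<in> I" "i \<notin> St s" using missed by blast
    then show "1 \<le> (\<Sum>i\<in>I. of_bool (i \<notin> St s) :: real)"
      using fin member_le_sum[of i I "\<lambda>i. of_bool (i \<notin> St s) :: real"] by simp
  qed
  also have "\<dots> = (\<Sum>i\<in>I. \<Sum>s<u. of_bool (i \<notin> St s))"
    by (rule sum.swap)
  finally have "c * real u \<le> (\<Sum>i\<in>I. c * (\<Sum>s<u. of_bool (i \<notin> St s)))"
    using \<open>0 < c\<close> by (simp add: sum_distrib_left[symmetric])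
  also have "\<dots> \<le> (\<Sum>i\<in>I. 2 * B + real u * d + c)"
  proof (rule sum_mono)
    fix i assume "i \<in> I"
    show "c * (\<Sum>s<u. of_bool (i \<notin> St s)) \<le> 2 * B + real u * d + c"
      by (rule unselected_count_bound[where Z = "\<lambda>t. Z t i"])
        (use \<open>i \<in> I\<close> keep gain start cap \<open>0 < c\<close> \<open>0 \<le> d\<close> \<open>0 \<le> B\<close> in auto)
  qed
  also have "\<dots> \<le> real k * (2 * B + real u * d + c)"
    using card \<open>0 < c\<close> \<open>0 \<le> d\<close> \<open>0 \<le> B\<close> by (simp add: mult_right_mono)
  finally show ?thesis .
qed

definition min_abs_entry :: "nat \<Rightarrow> (nat \<Rightarrow> real) \<Rightarrow> real" where
  "min_abs_entry n x = Min ((\<lambda>i. \<bar>x i\<bar>) ` supp n x)"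

lemma min_abs_entry_le: "i \<in> supp n x \<Longrightarrow> min_abs_entry n x \<le> \<bar>x i\<bar>"
  unfolding min_abs_entry_def supp_def by simp

lemma min_abs_entry_pos: "supp n x \<noteq> {} \<Longrightarrow> 0 < min_abs_entry n x"
proof -
  assume "supp n x \<noteq> {}"
  then have "min_abs_entry n x \<in> (\<lambda>i. \<bar>x i\<bar>) ` supp n x"
    unfolding min_abs_entry_def supp_def by (intro Min_in) auto
  then show ?thesis unfolding supp_def by auto
qed

lemma abs_le_vinfnorm: "i < n \<Longrightarrow> \<bar>x i\<bar> \<le> vinfnorm n x"
  unfolding vinfnorm_def by (intro Max_ge) auto

lemma off_support_drift:
  fixes X g :: "nat \<Rightarrow> nat \<Rightarrow> real" and xs :: "nat \<Rightarrow> real"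
  assumes step: "\<And>t i. X (Suc t) i = X t i - eta * g t i"
    and frozen: "\<And>t i. i \<in> largest n k (X t) \<Longrightarrow> g t i = 0"
    and drift: "\<And>t i. i < n \<Longrightarrow> i \<notin> largest n k (X t) \<Longrightarrow> \<bar>g t i + xs i\<bar> \<le> \<rho>"
    and eta: "0 < eta" and "0 \<le> \<rho>" and j: "j < n" "xs j = 0"
  shows "\<bar>X t j\<bar> \<le> vinfnorm n (X 0) + real t * (eta * \<rho>)"
proof (induction t)
  case 0
  show ?case using abs_le_vinfnorm[OF j(1)] by simp
next
  case (Suc t)
  have "\<bar>g t j\<bar> \<le> \<rho>"
    using frozen[of j t] drift[of j t] j \<open>0 \<le> \<rho>\<close> by (cases "j \<in> largest n k (X t)") auto
  then have "\<bar>eta * g t j\<bar> \<le> eta * \<rho>"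
    using eta by (simp add: abs_mult)
  then show ?case
    using Suc abs_triangle_ineq4[of "X t j" "eta * g t j"] unfolding step
    by (simp add: algebra_simps)
qed

lemma missed_rounds_bound:
  fixes X g :: "nat \<Rightarrow> nat \<Rightarrow> real" and xs :: "nat \<Rightarrow> real" and n k :: nat
  defines "xmin \<equiv> min_abs_entry n xs"
  assumes step: "\<And>t i. X (Suc t) i = X t i - eta * g t i"
    and frozen: "\<And>t i. i \<in> largest n k (X t) \<Longrightarrow> g t i = 0"
    and drift: "\<And>t i. i < n \<Longrightarrow> i \<notin> largest n k (X t) \<Longrightarrow> \<bar>g t i + xs i\<bar> \<le> \<rho>"
    and supp_ne: "supp n xs \<noteq> {}" and card: "card (supp n xs) \<le> k"
    and eta: "0 < eta" and "0 \<le> \<rho>" and "\<rho> < xmin"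
    and missed: "\<And>s. s < u \<Longrightarrow> \<not> supp n xs \<subseteq> largest n k (X s)"
  shows "(xmin - \<rho>) * real u \<le> real k * (2 * (vinfnorm n (X 0) / eta) + real u * \<rho> + (xmin - \<rho>))"
proof (rule unselected_rounds_bound[where Z = "\<lambda>t i. sgn (xs i) * X t i / eta"
      and St = "\<lambda>t. largest n k (X t)" and I = "supp n xs"])
  show "sgn (xs i) * X t i / eta \<le> sgn (xs i) * X (Suc t) i / eta"
    if "i \<in> largest n k (X t)" for i t
    using frozen[OF that] by (simp add: step)
  show "sgn (xs i) * X t i / eta + (xmin - \<rho>) \<le> sgn (xs i) * X (Suc t) i / eta"
    if i: "i \<in> supp n xs" "i \<notin> largest n k (X t)" for i t
  proof -
    have "i < n" "xs i \<noteq> 0" using i(1) unfolding supp_def by auto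
    then have "sgn (xs i) * g t i + \<bar>xs i\<bar> \<le> \<rho>"
      using drift[of i t] i(2) by (cases "xs i > 0") (auto simp: sgn_if abs_le_iff)
    moreover have "xmin \<le> \<bar>xs i\<bar>" unfolding xmin_def using i(1) by (rule min_abs_entry_le)
    moreover have "sgn (xs i) * X (Suc t) i / eta = sgn (xs i) * X t i / eta - sgn (xs i) * g t i"
      unfolding step using eta by (simp add: field_simps)
    ultimately show ?thesis by linarith
  qed
  show "sgn (xs i) * X t i / eta \<le> vinfnorm n (X 0) / eta + real t * \<rho>"
    if i: "i \<in> supp n xs" "i \<notin> largest n k (X t)" for i t
  proof -
    obtain j where j: "j < n" "j \<notin> supp n xs" "\<bar>X t i\<bar> \<le> \<bar>X t j\<bar>"
      using not_in_largest_dominated[of i n k "X t" "supp n xs"] i card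
      unfolding supp_def by auto
    have "sgn (xs i) * X t i \<le> \<bar>X t j\<bar>"
      using j(3) by (auto simp: sgn_if)
    also have "\<dots> \<le> vinfnorm n (X 0) + real t * (eta * \<rho>)"
      using off_support_drift[where X = X and g = g, OF step frozen drift eta \<open>0 \<le> \<rho>\<close> j(1)] j(1,2)
      unfolding supp_def by simp
    finally show ?thesis using eta by (simp add: field_simps)
  qed
  show "- (vinfnorm n (X 0) / eta) \<le> sgn (xs i) * X 0 i / eta" if "i \<in> supp n xs" for i
  proof -
    have "\<bar>sgn (xs i) * X 0 i\<bar> \<le> vinfnorm n (X 0)"
      using abs_le_vinfnorm[of i n "X 0"] that unfolding supp_def by (simp add: abs_mult abs_sgn_eq)
    then show ?thesis using eta by (simp add: field_simps abs_le_iff)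
  qed
  have "0 < n" using supp_ne unfolding supp_def by auto
  then show "0 \<le> vinfnorm n (X 0) / eta"
    using abs_le_vinfnorm[of 0 n "X 0"] eta by simp
qed (use card \<open>0 \<le> \<rho>\<close> \<open>\<rho> < xmin\<close> missed in auto)

lemma exploration_rounds_le:
  fixes u k :: nat and B xmin \<rho> :: real
  assumes count: "(xmin - \<rho>) * real u \<le> real k * (2 * B + real u * \<rho> + (xmin - \<rho>))"
    and "1 \<le> k" and "0 \<le> \<rho>" and "0 < xmin" and small: "2 * real k * \<rho> < xmin"
  shows "real u \<le> (2 * real k * B + (real k + 1) * xmin) / (xmin - 2 * real k * \<rho>)"
proof -
  have "real u * (xmin - 2 * real k * \<rho>) \<le> real u * (xmin - (real k + 1) * \<rho>)"
    using \<open>1 \<le> k\<close> \<open>0 \<le> \<rho>\<close> by (intro mult_left_mono) (auto intro!: mult_right_mono)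
  also have "\<dots> = (xmin - \<rho>) * real u - real k * (real u * \<rho>)"
    by (simp add: algebra_simps)
  also have "\<dots> \<le> 2 * real k * B + real k * (xmin - \<rho>)"
    using count by (simp add: algebra_simps)
  also have "\<dots> \<le> 2 * real k * B + (real k + 1) * xmin"
    using \<open>0 \<le> \<rho>\<close> \<open>0 < xmin\<close> by (simp add: algebra_simps)
  finally show ?thesis using small by (simp add: pos_le_divide_eq)
qed

lemma support_exploration:
  fixes X g :: "nat \<Rightarrow> nat \<Rightarrow> real" and xs :: "nat \<Rightarrow> real" and n k :: nat
  defines "xmin \<equiv> min_abs_entry n xs"
  assumes step: "\<And>t i. X (Suc t) i = X t i - eta * g t i"
    and frozen: "\<And>t i. i \<in> largest n k (X t) \<Longrightarrow> g t i = 0"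
    and drift: "\<And>t i. i < n \<Longrightarrow> i \<notin> largest n k (X t) \<Longrightarrow> \<bar>g t i + xs i\<bar> \<le> \<rho>"
    and supp_ne: "supp n xs \<noteq> {}" and card: "card (supp n xs) \<le> k"
    and eta: "0 < eta" and "0 \<le> \<rho>" and small: "2 * real k * \<rho> < xmin"
  shows "\<exists>t. real t \<le> (2 * real k * (vinfnorm n (X 0) / eta) + (real k + 1) * xmin)
                      / (xmin - 2 * real k * \<rho>)
           \<and> supp n xs \<subseteq> largest n k (X t)"
proof (rule ccontr)
  define T where "T = (2 * real k * (vinfnorm n (X 0) / eta) + (real k + 1) * xmin)
                      / (xmin - 2 * real k * \<rho>)"
  define u where "u = nat (\<lfloor>T\<rfloor> + 1)"
  assume "\<not> (\<exists>t. real t \<le> T \<and> supp n xs \<subseteq> largest n k (X t))"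
  then have missed: "\<not> supp n xs \<subseteq> largest n k (X s)" if "s < u" for s
    using that unfolding u_def by (auto dest!: spec[of _ s]) linarith
  have "1 \<le> k" using card supp_ne card_gt_0_iff[of "supp n xs"] by simp
  have "0 < xmin" unfolding xmin_def using supp_ne by (rule min_abs_entry_pos)
  have "1 * \<rho> \<le> (2 * real k) * \<rho>"
    using \<open>1 \<le> k\<close> \<open>0 \<le> \<rho>\<close> by (intro mult_right_mono) auto
  then have "\<rho> < xmin" using small by simp
  have "(xmin - \<rho>) * real u \<le> real k * (2 * (vinfnorm n (X 0) / eta) + real u * \<rho> + (xmin - \<rho>))"
    unfolding xmin_def
    by (rule missed_rounds_bound[where X = X and g = g and xs = xs and n = n and k = k and u = u])
      (fact step frozen drift supp_ne card eta \<open>0 \<le> \<rho>\<close> \<open>\<rho> < xmin\<close>[unfolded xmin_def] missed)+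
  then have "real u \<le> T"
    unfolding T_def using \<open>1 \<le> k\<close> \<open>0 \<le> \<rho>\<close> \<open>0 < xmin\<close> small by (rule exploration_rounds_le)
  moreover have "T < real u" unfolding u_def by linarith
  ultimately show False by simp
qed

section \<open>The Support Exploration Algorithm\<close>

text \<open>A \<open>2k\<close>-sparse error of norm below \<open>min\<^sub>i \<bar>x\<^sup>*\<^sub>i\<bar>\<close> cannot miss a support index, and once
  the support is found the error is \<open>k\<close>-sparse.\<close>
lemma recovery_from_small_residual:
  fixes A :: "nat \<Rightarrow> nat \<Rightarrow> real" and m n k :: nat and xs e x y :: "nat \<Rightarrow> real" and S :: "nat set"
  assumes y: "y = (\<lambda>p. mv A n xs p + e p)" and xs: "sparse n k xs"
    and S: "S \<subseteq> {..<n}" "card S \<le> k" and x: "\<And>j. j \<notin> S \<Longrightarrow> x j = 0"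
    and ric: "ric A m n (2 * k) < 1"
    and residual: "vnorm m (\<lambda>p. mv A n x p - y p) \<le> vnorm m e"
    and large: "2 / sqrt (1 - ric A m n (2 * k)) * vnorm m e < min_abs_entry n xs"
  shows "supp n xs \<subseteq> S \<and> vnorm n (\<lambda>i. x i - xs i) \<le> 2 / sqrt (1 - ric A m n k) * vnorm m e"
proof -
  define h where "h = (\<lambda>i. 1 * x i + (- 1) * xs i)"
  have "mv A n h = (\<lambda>p. (mv A n x p - y p) + e p)"
    unfolding h_def y mv_lincomb by simp
  then have Ah: "vnorm m (mv A n h) \<le> 2 * vnorm m e"
    using vnorm_triangle[of m "\<lambda>p. mv A n x p - y p" e] residual by simp
  have "sparse n k x" using S x by (rule sparse_if_zero_outside)
  then have "sparse n (2 * k) h"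
    using sparse_lincomb[OF _ xs, where a = 1 and b = "- 1"] unfolding h_def mult_2 by blast
  then have "vnorm n h \<le> 2 * vnorm m e / sqrt (1 - ric A m n (2 * k))"
    using rip_error_bound ric Ah by blast
  then have "vnorm n h < min_abs_entry n xs"
    using large by simp
  have support: "supp n xs \<subseteq> S"
  proof
    fix i assume i: "i \<in> supp n xs"
    show "i \<in> S"
    proof (rule ccontr)
      assume "i \<notin> S"
      then have "\<bar>xs i\<bar> \<le> vnorm n h"
        using abs_le_vnorm[of i n h] i x unfolding h_def supp_def by simp
      with min_abs_entry_le[OF i] \<open>vnorm n h < min_abs_entry n xs\<close> show False by simp
    qed
  qed
  have "sparse n k h"
  proof (rule sparse_if_zero_outside[OF S])
    fix j assume "j \<notin> S"
    then show "h j = 0" using x support xs unfolding h_def sparse_def supp_def by (cases "j < n") auto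
  qed
  then have "vnorm n h \<le> 2 * vnorm m e / sqrt (1 - ric A m n k)"
    using rip_error_bound Ah ric_lt_1_mono[OF ric] by simp
  then show ?thesis using support by (simp add: h_def)
qed

lemma seaX_Suc:
  "seaX A m n k eta y X0 (Suc t) i
     = seaX A m n k eta y X0 t i - eta * mtv A m (\<lambda>p. mv A n (seax A m n k eta y X0 t) p - y p) i"
  by (simp add: seax_def seaS_def mtv_def Let_def)

lemma seax_eq_lsq: "seax A m n k eta y X0 t = lsq A m (largest n k (seaX A m n k eta y X0 t)) y"
  by (simp add: seax_def seaS_def)

lemma sea_support_found:
  fixes A :: "nat \<Rightarrow> nat \<Rightarrow> real" and m n k :: nat and xs e y X0 :: "nat \<Rightarrow> real"
  defines "\<rho> \<equiv> alphaRIP A m n k * vnorm n xs + gammaRIP A m n k * vnorm m e"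
  assumes y: "y = (\<lambda>p. mv A n xs p + e p)" and xs: "sparse n k xs" and "supp n xs \<noteq> {}"
    and ric: "ric A m n (2 * k + 1) < 1" and unit: "\<forall>j<n. vnorm m (\<lambda>p. A p j) = 1"
    and "0 < eta" and "2 * real k * \<rho> < min_abs_entry n xs"
  shows "\<exists>t. real t \<le> (2 * real k * (vinfnorm n X0 / eta) + (real k + 1) * min_abs_entry n xs)
                      / (min_abs_entry n xs - 2 * real k * \<rho>)
           \<and> supp n xs \<subseteq> seaS A m n k eta y X0 t"
proof -
  let ?X = "seaX A m n k eta y X0"
  define g where "g t = mtv A m (\<lambda>p. mv A n (seax A m n k eta y X0 t) p - y p)" for t
  have sel: "largest n k (?X t) \<subseteq> {..<n}" "card (largest n k (?X t)) \<le> k" for t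
    by (rule largest_subset, rule card_largest)
  have step: "?X (Suc t) i = ?X t i - eta * g t i" for t i
    unfolding g_def by (rule seaX_Suc)
  have frozen: "g t i = 0" if "i \<in> largest n k (?X t)" for t i
    unfolding g_def seax_eq_lsq using lsq_normal_equations[OF sel ric_lt_1_mono[OF ric] that] by simp
  have drift: "\<bar>g t i + xs i\<bar> \<le> \<rho>" if "i < n" "i \<notin> largest n k (?X t)" for t i
    unfolding g_def seax_eq_lsq \<rho>_def
    using lsq_gradient_off_support[OF y xs sel ric that] unit that(1) by simp
  have "0 \<le> \<rho>"
    unfolding \<rho>_def using alphaRIP_nonneg[OF ric] gammaRIP_nonneg[OF ric] by simp
  with support_exploration[where X = ?X and g = g, OF step frozen drift] assms xs
  show ?thesis unfolding seaS_def sparse_def by simp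
qed

lemma sea_residual_le_noise:
  assumes y: "y = (\<lambda>p. mv A n xs p + e p)" and xs: "sparse n k xs" and ric: "ric A m n k < 1"
    and found: "supp n xs \<subseteq> seaS A m n k eta y X0 t"
  shows "vnorm m (\<lambda>p. mv A n (seax A m n k eta y X0 t) p - y p) \<le> vnorm m e"
proof -
  have "xs j = 0" if "j \<notin> largest n k (seaX A m n k eta y X0 t)" for j
    using found xs that unfolding sparse_def supp_def seaS_def by (cases "j < n") auto
  then have "vnorm m (\<lambda>p. mv A n (seax A m n k eta y X0 t) p - y p) \<le> vnorm m (\<lambda>p. mv A n xs p - y p)"
    unfolding seax_eq_lsq by (rule lsq_minimal[OF largest_subset card_largest ric])
  also have "(\<lambda>p. mv A n xs p - y p) = (\<lambda>p. - e p)" unfolding y by simp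
  finally show ?thesis by (simp add: vnorm_def)
qed

text \<open>Once an iterate has found the support, its residual is at most \<open>\<parallel>e\<parallel>\<close>, hence so is
  the residual of the best iterate.\<close>
lemma sea_best_iterate_recovers:
  assumes y: "y = (\<lambda>p. mv A n xs p + e p)" and xs: "sparse n k xs" and ric: "ric A m n (2 * k) < 1"
    and found: "supp n xs \<subseteq> seaS A m n k eta y X0 ts" and "ts < N"
    and best: "is_tbest A m n k eta y X0 N tb"
    and large: "2 / sqrt (1 - ric A m n (2 * k)) * vnorm m e < min_abs_entry n xs"
  shows "supp n xs \<subseteq> seaS A m n k eta y X0 tb \<and>
    vnorm n (\<lambda>i. seax A m n k eta y X0 tb i - xs i) \<le> 2 / sqrt (1 - ric A m n k) * vnorm m e"
proof -
  have "ric A m n k < 1" using ric_lt_1_mono[OF ric] by simp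
  have "vnorm m (\<lambda>p. mv A n (seax A m n k eta y X0 tb) p - y p) \<le> vnorm m e"
    using best \<open>ts < N\<close> sea_residual_le_noise[OF y xs \<open>ric A m n k < 1\<close> found]
    unfolding is_tbest_def by (meson order_trans)
  from recovery_from_small_residual[OF y xs largest_subset card_largest lsq_zero_outside ric this[unfolded seax_eq_lsq]]
  show ?thesis using large unfolding seaS_def seax_eq_lsq by simp
qed

theorem theorem4p1:
  fixes A :: "nat \<Rightarrow> nat \<Rightarrow> real" and m n k :: nat
    and xs e X0 :: "nat \<Rightarrow> real" and eta :: real
  defines "y \<equiv> (\<lambda>i. mv A n xs i + e i)"
  defines "xmin \<equiv> Min ((\<lambda>i. \<bar>xs i\<bar>) ` supp n xs)"
  defines "T \<equiv> (2 * real k * (vinfnorm n X0 / eta) + (real k + 1) * xmin)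
                / (xmin - 2 * real k * (alphaRIP A m n k * vnorm n xs + gammaRIP A m n k * vnorm m e))"
  assumes "0 < m" and "0 < n" and "0 < k" and "2 * k + 1 \<le> n"
    and "\<forall>i\<ge>n. xs i = 0"
    and "1 \<le> card (supp n xs)" and "card (supp n xs) \<le> k"
    and "ric A m n (2 * k + 1) < 1"
    and "\<forall>j<n. vnorm m (\<lambda>i. A i j) = 1"
    and "gammaRIP A m n k * vnorm m e < xmin / (2 * real k) - alphaRIP A m n k * vnorm n xs"
    and "0 < eta"
  shows "(\<exists>ts::nat. real ts \<le> T \<and> supp n xs \<subseteq> seaS A m n k eta y X0 ts)
       \<and> (xmin > 2 / sqrt (1 - ric A m n (2 * k)) * vnorm m e \<longrightarrow>
           (\<forall>N::nat. real N > T \<longrightarrow>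
             (\<forall>tb. is_tbest A m n k eta y X0 N tb \<longrightarrow>
                supp n xs \<subseteq> seaS A m n k eta y X0 tb \<and>
                vnorm n (\<lambda>i. seax A m n k eta y X0 tb i - xs i)
                  \<le> 2 / sqrt (1 - ric A m n k) * vnorm m e)))"
proof -
  have y: "y = (\<lambda>p. mv A n xs p + e p)" using assms(1) by simp
  have xmin: "xmin = min_abs_entry n xs" unfolding assms(2) min_abs_entry_def ..
  have xs: "sparse n k xs" using assms(8,10) by (simp add: sparse_def)
  have "supp n xs \<noteq> {}" using assms(9) by auto
  moreover have "2 * real k * (alphaRIP A m n k * vnorm n xs + gammaRIP A m n k * vnorm m e) < xmin"
    using assms(6,13) by (simp add: field_simps)
  ultimately obtain ts where "real ts \<le> T" and ts: "supp n xs \<subseteq> seaS A m n k eta y X0 ts"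
    using sea_support_found[OF y xs _ assms(11,12,14), of X0] unfolding assms(3) xmin by blast
  have "supp n xs \<subseteq> seaS A m n k eta y X0 tb \<and>
      vnorm n (\<lambda>i. seax A m n k eta y X0 tb i - xs i) \<le> 2 / sqrt (1 - ric A m n k) * vnorm m e"
    if "2 / sqrt (1 - ric A m n (2 * k)) * vnorm m e < xmin" "T < real N"
      and "is_tbest A m n k eta y X0 N tb" for N tb
  proof (rule sea_best_iterate_recovers[OF y xs _ ts _ that(3)])
    show "ric A m n (2 * k) < 1" using ric_lt_1_mono[OF assms(11)] by simp
    show "ts < N" using \<open>real ts \<le> T\<close> that(2) by linarith
  qed (use that(1) xmin in simp)
  with \<open>real ts \<le> T\<close> ts show ?thesis by blast
qed

end
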